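(* If $k$ is even and sufficiently large, and $n$ is even, then for every integer $i$ with $k/2<i<k$, $$N(CM,k,n)\ge \frac{n(5ik-k+i+i^2)-2(k-i)}{(2k+3+i)ik}.$$ In particular, for every $\varepsilon>0$ there is $k_0$ such that for every even $k>k_0$ there is $n_0(k)$ such that for every even $n>n_0(k)$ we have $N(CM,k,n)>(11/5-\varepsilon)\,n/k$.
   Context: We are given $n$ balls, the set $[n]=\{1,\dots,n\}$, each colored with one of two colors by an unknown coloring. A ball $i$ is a majority ball if more than $n/2$ balls have the same color as $i$. A query is a subset $Q\subseteq[n]$ with $|Q|=k$. In the Counting Model (CM), the answer to a query $Q$ is the number $j\le k/2$ such that $Q$ contains exactly $j$ balls of one of the colors (and $k-j$ of the other); no indication of which color is given. A non-adaptive strategy is a family of queries $Q_1,\dots,Q_q$ fixed in advance. It succeeds if for every coloring, the answers determine the outcome: either every coloring consistent with the answers has no majority ball, or there is a ball that is a majority ball in every coloring consistent with the answers. $N(CM,k,n)$ is the minimum number of queries in a successful non-adaptive strategy. *)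

theory Defs
  imports Main "HOL-Library.Extended_Real"
begin

text \<open>Balls are 1..n; a coloring is a function nat => bool (only values on 1..n matter).\<close>

definition maj_ball :: "nat \<Rightarrow> (nat \<Rightarrow> bool) \<Rightarrow> nat \<Rightarrow> bool" where
  "maj_ball n c i \<longleftrightarrow> i \<in> {1..n} \<and> 2 * card {j \<in> {1..n}. c j = c i} > n"

definition cm_answer :: "(nat \<Rightarrow> bool) \<Rightarrow> nat set \<Rightarrow> nat" where
  "cm_answer c Q = min (card {j \<in> Q. c j}) (card {j \<in> Q. \<not> c j})"

definition valid_queries :: "nat \<Rightarrow> nat \<Rightarrow> nat set list \<Rightarrow> bool" where
  "valid_queries k n qs \<longleftrightarrow> (\<forall>Q \<in> set qs. Q \<subseteq> {1..n} \<and> card Q = k)"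

definition consistent :: "nat set list \<Rightarrow> (nat \<Rightarrow> bool) \<Rightarrow> (nat \<Rightarrow> bool) \<Rightarrow> bool" where
  "consistent qs c c' \<longleftrightarrow> (\<forall>Q \<in> set qs. cm_answer c' Q = cm_answer c Q)"

definition succeeds :: "nat \<Rightarrow> nat set list \<Rightarrow> bool" where
  "succeeds n qs \<longleftrightarrow> (\<forall>c.
     (\<forall>c'. consistent qs c c' \<longrightarrow> \<not> (\<exists>i. maj_ball n c' i)) \<or>
     (\<exists>i. \<forall>c'. consistent qs c c' \<longrightarrow> maj_ball n c' i))"

text \<open>N(CM,k,n): minimum number of queries of a successful non-adaptive strategy
  (infinity if there is none).\<close>
definition N_CM :: "nat \<Rightarrow> nat \<Rightarrow> enat" where
  "N_CM k n = (INF qs \<in> {qs. valid_queries k n qs \<and> succeeds n qs}. enat (length qs))"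

end

(*
  A successful strategy with q queries in fact satisfies 3 n <= q (k + 2), which implies both
  claims. Start from a colouring c with n/2 balls of each colour. Flipping the colours of a set F
  of balls does not change the answer to a query Q if c is balanced on Q inter F or on Q - F; if c
  is unbalanced on F, the flipped colouring has a majority ball and c has none, so the strategy
  fails.

  Balls lying in at most two queries are edges of a multigraph on the queries plus one extra
  vertex. If one of them lies in no query, or there are more of them than queries, this graph has
  a cycle of some L <= q + 1 balls. An alternating colouring of the cycle fails to alternate at no
  more than two queries, and if n >= L + 2k the other balls can be coloured so that c is balanced
  on [n] and on the part of these two queries outside the cycle. Flipping the cycle then refutes
  the strategy, so n < q + 1 + 2k. Otherwise every ball lies in some query and all but at most q
  balls lie in three, and double counting gives 3 n - 2 q <= q k. Finally, swapping two balls
  with the same set of queries is invisible, so n <= 2^(q+1); for k >= 2^14 this settles the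
  remaining range k <= n < 4k.
*)

theory Submission
  imports Defs "HOL-Combinatorics.Transposition"
begin

section \<open>Balanced colourings\<close>

lemma card_filter_Int_Diff:
  assumes "finite A"
  shows "card {x \<in> A. P x} = card {x \<in> A \<inter> F. P x} + card {x \<in> A - F. P x}"
proof -
  have "{x \<in> A. P x} = {x \<in> A \<inter> F. P x} \<union> {x \<in> A - F. P x}" by blast
  moreover have "{x \<in> A \<inter> F. P x} \<inter> {x \<in> A - F. P x} = {}" by blast
  ultimately show ?thesis using assms by (simp add: card_Un_disjoint)
qed

lemma card_filter_add_card_filter_not:
  assumes "finite A"
  shows "card {x \<in> A. P x} + card {x \<in> A. \<not> P x} = card A"
proof -
  have "{x \<in> A. P x} \<union> {x \<in> A. \<not> P x} = A" by blast
  moreover have "{x \<in> A. P x} \<inter> {x \<in> A. \<not> P x} = {}" by blast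
  ultimately show ?thesis using assms by (metis card_Un_disjoint finite_Un)
qed

definition balanced :: "(nat \<Rightarrow> bool) \<Rightarrow> nat set \<Rightarrow> bool" where
  "balanced c A \<longleftrightarrow> 2 * card {x \<in> A. c x} = card A"

lemma balanced_pair:
  assumes "a \<noteq> b" and "c a \<noteq> c b"
  shows "balanced c {a, b}"
proof -
  have "{x \<in> {a, b}. c x} = (if c a then {a} else {b})" using assms(2) by auto
  then show ?thesis unfolding balanced_def using assms(1) by simp
qed

lemma exists_subset_balanced_two:
  assumes "finite A\<^sub>1" and "finite A\<^sub>2" and "even (card A\<^sub>1)" and "even (card A\<^sub>2)"
  obtains R where "R \<subseteq> A\<^sub>1 \<union> A\<^sub>2" and "2 * card (A\<^sub>1 \<inter> R) = card A\<^sub>1" and "2 * card (A\<^sub>2 \<inter> R) = card A\<^sub>2"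
    and "card (A\<^sub>1 \<union> A\<^sub>2) \<le> 2 * card R" and "2 * card R \<le> card (A\<^sub>1 \<union> A\<^sub>2) + 1"
proof -
  define t where "t = card (A\<^sub>1 \<inter> A\<^sub>2) div 2"
  obtain a\<^sub>1 a\<^sub>2 where a: "card A\<^sub>1 = 2 * a\<^sub>1" "card A\<^sub>2 = 2 * a\<^sub>2"
    using assms(3,4) by (meson evenE)
  have fin: "finite (A\<^sub>1 \<inter> A\<^sub>2)" "finite (A\<^sub>1 - A\<^sub>2)" "finite (A\<^sub>2 - A\<^sub>1)" using assms(1,2) by auto
  have c1: "card A\<^sub>1 = card (A\<^sub>1 \<inter> A\<^sub>2) + card (A\<^sub>1 - A\<^sub>2)"
    using card_Int_Diff[OF assms(1)] .
  have c2: "card A\<^sub>2 = card (A\<^sub>1 \<inter> A\<^sub>2) + card (A\<^sub>2 - A\<^sub>1)"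
    using card_Int_Diff[OF assms(2), of A\<^sub>1] by (simp add: Int_commute)
  have cU: "card (A\<^sub>1 \<union> A\<^sub>2) = card (A\<^sub>1 \<inter> A\<^sub>2) + card (A\<^sub>1 - A\<^sub>2) + card (A\<^sub>2 - A\<^sub>1)"
    using card_Un_disjoint[OF assms(1) fin(3)] c1 by simp
  have t: "t \<le> card (A\<^sub>1 \<inter> A\<^sub>2)" "a\<^sub>1 - t \<le> card (A\<^sub>1 - A\<^sub>2)" "a\<^sub>2 - t \<le> card (A\<^sub>2 - A\<^sub>1)"
    using a c1 c2 unfolding t_def by presburger+
  obtain R\<^sub>0 where R\<^sub>0: "R\<^sub>0 \<subseteq> A\<^sub>1 \<inter> A\<^sub>2" "card R\<^sub>0 = t"
    using obtain_subset_with_card_n[OF t(1)] by blast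
  obtain R\<^sub>1 where R\<^sub>1: "R\<^sub>1 \<subseteq> A\<^sub>1 - A\<^sub>2" "card R\<^sub>1 = a\<^sub>1 - t"
    using obtain_subset_with_card_n[OF t(2)] by blast
  obtain R\<^sub>2 where R\<^sub>2: "R\<^sub>2 \<subseteq> A\<^sub>2 - A\<^sub>1" "card R\<^sub>2 = a\<^sub>2 - t"
    using obtain_subset_with_card_n[OF t(3)] by blast
  have finR: "finite R\<^sub>0" "finite R\<^sub>1" "finite R\<^sub>2"
    using finite_subset[OF R\<^sub>0(1) fin(1)] finite_subset[OF R\<^sub>1(1) fin(2)]
      finite_subset[OF R\<^sub>2(1) fin(3)] by simp_all
  have disj: "R\<^sub>0 \<inter> R\<^sub>1 = {}" "R\<^sub>0 \<inter> R\<^sub>2 = {}" "(R\<^sub>0 \<union> R\<^sub>1) \<inter> R\<^sub>2 = {}"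
    using R\<^sub>0(1) R\<^sub>1(1) R\<^sub>2(1) by blast+
  have "A\<^sub>1 \<inter> (R\<^sub>0 \<union> R\<^sub>1 \<union> R\<^sub>2) = R\<^sub>0 \<union> R\<^sub>1" "A\<^sub>2 \<inter> (R\<^sub>0 \<union> R\<^sub>1 \<union> R\<^sub>2) = R\<^sub>0 \<union> R\<^sub>2"
    using R\<^sub>0(1) R\<^sub>1(1) R\<^sub>2(1) by blast+
  then have "card (A\<^sub>1 \<inter> (R\<^sub>0 \<union> R\<^sub>1 \<union> R\<^sub>2)) = t + (a\<^sub>1 - t)"
    and "card (A\<^sub>2 \<inter> (R\<^sub>0 \<union> R\<^sub>1 \<union> R\<^sub>2)) = t + (a\<^sub>2 - t)"
    and "card (R\<^sub>0 \<union> R\<^sub>1 \<union> R\<^sub>2) = t + (a\<^sub>1 - t) + (a\<^sub>2 - t)"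
    using R\<^sub>0(2) R\<^sub>1(2) R\<^sub>2(2) finR disj by (simp_all add: card_Un_disjoint)
  moreover have "R\<^sub>0 \<union> R\<^sub>1 \<union> R\<^sub>2 \<subseteq> A\<^sub>1 \<union> A\<^sub>2" using R\<^sub>0(1) R\<^sub>1(1) R\<^sub>2(1) by blast
  moreover have "2 * t \<le> card (A\<^sub>1 \<inter> A\<^sub>2)" "card (A\<^sub>1 \<inter> A\<^sub>2) \<le> 2 * t + 1"
    unfolding t_def by simp_all
  ultimately show ?thesis
    using that[of "R\<^sub>0 \<union> R\<^sub>1 \<union> R\<^sub>2"] a c1 c2 cU by simp
qed

lemma exists_balanced_colouring:
  assumes U: "finite U" and FU: "F \<subseteq> U" and RF: "R\<^sub>F \<subseteq> F" and A: "A\<^sub>1 \<union> A\<^sub>2 \<subseteq> U - F"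
    and "even (card A\<^sub>1)" and "even (card A\<^sub>2)" and "even (card U)"
    and small: "card (A\<^sub>1 \<union> A\<^sub>2) + 2 * card R\<^sub>F \<le> card U"
    and large: "card (A\<^sub>1 \<union> A\<^sub>2) + 2 * card F \<le> card U + 2 * card R\<^sub>F"
  obtains c where "\<And>x. x \<in> F \<Longrightarrow> c x \<longleftrightarrow> x \<in> R\<^sub>F" and "balanced c U"
    and "balanced c A\<^sub>1" and "balanced c A\<^sub>2"
proof -
  have fin: "finite A\<^sub>1" "finite A\<^sub>2" "finite F" "finite R\<^sub>F"
    using A FU RF U by (meson Un_subset_iff Diff_subset finite_subset)+
  obtain R\<^sub>0 where R\<^sub>0: "R\<^sub>0 \<subseteq> A\<^sub>1 \<union> A\<^sub>2" "2 * card (A\<^sub>1 \<inter> R\<^sub>0) = card A\<^sub>1" "2 * card (A\<^sub>2 \<inter> R\<^sub>0) = card A\<^sub>2"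
    "card (A\<^sub>1 \<union> A\<^sub>2) \<le> 2 * card R\<^sub>0" "2 * card R\<^sub>0 \<le> card (A\<^sub>1 \<union> A\<^sub>2) + 1"
    using exists_subset_balanced_two[OF fin(1,2) assms(5,6)] by blast
  obtain u where u: "card U = 2 * u" using assms(7) by (meson evenE)
  define E where "E = U - F - (A\<^sub>1 \<union> A\<^sub>2)"
  have "card (U - F) = card U - card F" using FU fin(3) by (simp add: card_Diff_subset)
  moreover have "card E = card (U - F) - card (A\<^sub>1 \<union> A\<^sub>2)"
    unfolding E_def using A fin(1,2) by (simp add: card_Diff_subset)
  moreover have "card F \<le> card U" using FU U by (simp add: card_mono)
  moreover have "card (A\<^sub>1 \<union> A\<^sub>2) \<le> card (U - F)" using A U by (simp add: card_mono)
  ultimately have "u - card R\<^sub>F - card R\<^sub>0 \<le> card E" using u small large R\<^sub>0(4,5) by linarith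
  then obtain E' where E': "E' \<subseteq> E" "card E' = u - card R\<^sub>F - card R\<^sub>0"
    by (meson obtain_subset_with_card_n)
  define R where "R = R\<^sub>F \<union> R\<^sub>0 \<union> E'"
  have finR: "finite R\<^sub>0" "finite E'"
    using finite_subset[OF R\<^sub>0(1)] finite_subset[OF E'(1)] fin U unfolding E_def by simp_all
  have disj: "R\<^sub>F \<inter> R\<^sub>0 = {}" "(R\<^sub>F \<union> R\<^sub>0) \<inter> E' = {}"
    using RF R\<^sub>0(1) E'(1) A unfolding E_def by blast+
  have "card R = card R\<^sub>F + card R\<^sub>0 + card E'"
    unfolding R_def using finR fin(4) disj by (simp add: card_Un_disjoint)
  moreover have "{x \<in> U. x \<in> R} = R"
    using RF FU R\<^sub>0(1) E'(1) A unfolding R_def E_def by blast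
  ultimately have bal_U: "balanced (\<lambda>x. x \<in> R) U"
    unfolding balanced_def using u small R\<^sub>0(5) E'(2) by simp
  have "{x \<in> A\<^sub>1. x \<in> R} = A\<^sub>1 \<inter> R\<^sub>0" "{x \<in> A\<^sub>2. x \<in> R} = A\<^sub>2 \<inter> R\<^sub>0"
    using RF A E'(1) unfolding R_def E_def by blast+
  then have bal_A: "balanced (\<lambda>x. x \<in> R) A\<^sub>1" "balanced (\<lambda>x. x \<in> R) A\<^sub>2"
    unfolding balanced_def using R\<^sub>0(2,3) by simp_all
  have "x \<in> R \<longleftrightarrow> x \<in> R\<^sub>F" if "x \<in> F" for x
    using that A R\<^sub>0(1) E'(1) unfolding R_def E_def by blast
  then show ?thesis using that[OF _ bal_U bal_A] by blast
qed

section \<open>Refuting a strategy\<close>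

lemma valid_queries_nth:
  assumes "valid_queries k n qs" and "v < length qs"
  shows "qs ! v \<subseteq> {1..n}" and "card (qs ! v) = k" and "finite (qs ! v)"
proof -
  show "qs ! v \<subseteq> {1..n}" "card (qs ! v) = k"
    using assms nth_mem unfolding valid_queries_def by blast+
  then show "finite (qs ! v)" using finite_subset by blast
qed

lemma consistent_refl: "consistent qs c c"
  unfolding consistent_def by simp

lemma not_succeedsI:
  assumes "consistent qs c c\<^sub>1" and "\<exists>i. maj_ball n c\<^sub>1 i"
    and "\<And>i. \<exists>c'. consistent qs c c' \<and> \<not> maj_ball n c' i"
  shows "\<not> succeeds n qs"
  using assms unfolding succeeds_def by blast

lemma ex_maj_ball_iff: "(\<exists>i. maj_ball n c i) \<longleftrightarrow> \<not> balanced c {1..n}"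
proof -
  have split: "card {j \<in> {1..n}. c j} + card {j \<in> {1..n}. \<not> c j} = n"
    using card_filter_add_card_filter_not[of "{1..n}" c] by simp
  have colour_class: "{j \<in> {1..n}. c j = c i} = (if c i then {j \<in> {1..n}. c j} else {j \<in> {1..n}. \<not> c j})"
    for i by auto
  show ?thesis
  proof
    assume "\<exists>i. maj_ball n c i"
    then show "\<not> balanced c {1..n}"
      using split colour_class unfolding maj_ball_def balanced_def by (auto split: if_splits)
  next
    assume "\<not> balanced c {1..n}"
    then consider "2 * card {j \<in> {1..n}. c j} > n" | "2 * card {j \<in> {1..n}. \<not> c j} > n"
      using split unfolding balanced_def by fastforce
    then show "\<exists>i. maj_ball n c i"
    proof cases
      case 1
      then obtain i where "i \<in> {1..n}" "c i"
        by (metis (mono_tags, lifting) Collect_empty_eq card.empty gr_implies_not0 mult_0_right)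
      then show ?thesis using 1 colour_class unfolding maj_ball_def by auto
    next
      case 2
      then obtain i where "i \<in> {1..n}" "\<not> c i"
        by (metis (mono_tags, lifting) Collect_empty_eq card.empty gr_implies_not0 mult_0_right)
      then show ?thesis using 2 colour_class unfolding maj_ball_def by auto
    qed
  qed
qed

definition flip_on :: "nat set \<Rightarrow> (nat \<Rightarrow> bool) \<Rightarrow> nat \<Rightarrow> bool" where
  "flip_on F c x = (if x \<in> F then \<not> c x else c x)"

lemma flip_on_filter:
  shows "{x \<in> A \<inter> F. flip_on F c x} = {x \<in> A \<inter> F. \<not> c x}"
    and "{x \<in> A \<inter> F. \<not> flip_on F c x} = {x \<in> A \<inter> F. c x}"
    and "{x \<in> A - F. flip_on F c x} = {x \<in> A - F. c x}"
    and "{x \<in> A - F. \<not> flip_on F c x} = {x \<in> A - F. \<not> c x}"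
  by (auto simp: flip_on_def)

(* Flipping keeps both colour counts of Q if Q \<inter> F is balanced and swaps them if Q - F is. *)
lemma cm_answer_flip_on:
  assumes "finite Q" and "balanced c (Q \<inter> F) \<or> balanced c (Q - F)"
  shows "cm_answer (flip_on F c) Q = cm_answer c Q"
proof -
  have "card {x \<in> Q \<inter> F. c x} + card {x \<in> Q \<inter> F. \<not> c x} = card (Q \<inter> F)"
    and "card {x \<in> Q - F. c x} + card {x \<in> Q - F. \<not> c x} = card (Q - F)"
    by (rule card_filter_add_card_filter_not, simp add: assms(1))+
  moreover have "card {x \<in> Q. flip_on F c x} = card {x \<in> Q \<inter> F. \<not> c x} + card {x \<in> Q - F. c x}"
    and "card {x \<in> Q. \<not> flip_on F c x} = card {x \<in> Q \<inter> F. c x} + card {x \<in> Q - F. \<not> c x}"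
    and "card {x \<in> Q. c x} = card {x \<in> Q \<inter> F. c x} + card {x \<in> Q - F. c x}"
    and "card {x \<in> Q. \<not> c x} = card {x \<in> Q \<inter> F. \<not> c x} + card {x \<in> Q - F. \<not> c x}"
    using card_filter_Int_Diff[OF assms(1), where F = F] by (simp_all only: flip_on_filter)
  ultimately show ?thesis
    using assms(2) unfolding cm_answer_def balanced_def by linarith
qed

lemma balanced_flip_on_iff:
  assumes "finite A" and "F \<subseteq> A" and "balanced c A"
  shows "balanced (flip_on F c) A \<longleftrightarrow> balanced c F"
proof -
  have "balanced c F \<longleftrightarrow> 2 * card {x \<in> A \<inter> F. c x} = card (A \<inter> F)"
    using assms(2) unfolding balanced_def by (simp only: Int_absorb1)
  moreover have "card {x \<in> A \<inter> F. c x} + card {x \<in> A \<inter> F. \<not> c x} = card (A \<inter> F)"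
    by (rule card_filter_add_card_filter_not) (simp add: assms(1))
  moreover have "card {x \<in> A. flip_on F c x} = card {x \<in> A \<inter> F. \<not> c x} + card {x \<in> A - F. c x}"
    and "card {x \<in> A. c x} = card {x \<in> A \<inter> F. c x} + card {x \<in> A - F. c x}"
    using card_filter_Int_Diff[OF assms(1), where F = F] by (simp_all only: flip_on_filter)
  ultimately show ?thesis
    using assms(3) unfolding balanced_def by linarith
qed

lemma not_succeeds_flip_on:
  assumes "balanced c {1..n}" and "F \<subseteq> {1..n}" and "\<not> balanced c F"
    and "\<And>Q. Q \<in> set qs \<Longrightarrow> finite Q \<and> (balanced c (Q \<inter> F) \<or> balanced c (Q - F))"
  shows "\<not> succeeds n qs"
proof (rule not_succeedsI)
  show "consistent qs c (flip_on F c)"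
    unfolding consistent_def using assms(4) cm_answer_flip_on by blast
  have "\<not> balanced (flip_on F c) {1..n}"
    using balanced_flip_on_iff[OF _ assms(2,1)] assms(3) by simp
  then show "\<exists>i. maj_ball n (flip_on F c) i"
    by (simp add: ex_maj_ball_iff)
  show "\<exists>c'. consistent qs c c' \<and> \<not> maj_ball n c' i" for i
    using assms(1) consistent_refl ex_maj_ball_iff by blast
qed

lemma not_succeeds_Nil:
  assumes "even n" and "0 < n"
  shows "\<not> succeeds n []"
proof (rule not_succeeds_flip_on)
  have "{x \<in> {1..n}. x \<le> n div 2} = {1..n div 2}" by auto
  then show "balanced (\<lambda>x. x \<le> n div 2) {1..n}"
    using assms(1) unfolding balanced_def by simp
  show "\<not> balanced (\<lambda>x. x \<le> n div 2) {1}"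
    unfolding balanced_def by (auto simp: Collect_conv_if)
qed (use assms(2) in auto)

section \<open>Membership patterns\<close>

lemma card_filter_bij_betw:
  assumes "bij_betw \<sigma> A A"
  shows "card {x \<in> A. P (\<sigma> x)} = card {x \<in> A. P x}"
proof -
  have "\<sigma> ` {x \<in> A. P (\<sigma> x)} = {x \<in> A. P x}"
    using assms by (force simp: bij_betw_def)
  moreover have "inj_on \<sigma> {x \<in> A. P (\<sigma> x)}"
    using assms by (auto simp: bij_betw_def intro: inj_on_subset)
  ultimately show ?thesis by (metis card_image)
qed

lemma cm_answer_comp_bij_betw:
  assumes "bij_betw \<sigma> Q Q"
  shows "cm_answer (c \<circ> \<sigma>) Q = cm_answer c Q"
  using card_filter_bij_betw[OF assms, of c] card_filter_bij_betw[OF assms, of "\<lambda>x. \<not> c x"]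
  unfolding cm_answer_def by simp

definition pattern :: "nat set list \<Rightarrow> nat \<Rightarrow> nat set" where
  "pattern qs x = {j. j < length qs \<and> x \<in> qs ! j}"

lemma pattern_subset: "pattern qs x \<subseteq> {..<length qs}"
  unfolding pattern_def by auto

lemma consistent_transpose:
  assumes "pattern qs a = pattern qs b"
  shows "consistent qs c (c \<circ> transpose a b)"
  unfolding consistent_def
proof
  fix Q assume "Q \<in> set qs"
  then obtain j where "j < length qs" "Q = qs ! j" by (metis in_set_conv_nth)
  then have "a \<in> Q \<longleftrightarrow> b \<in> Q"
    using assms unfolding pattern_def by blast
  then show "cm_answer (c \<circ> transpose a b) Q = cm_answer c Q"
    by (simp add: cm_answer_comp_bij_betw)
qed

(* Colour one ball of each pattern blue: then red has a majority, but every red ball can swap its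
   colour with the blue ball of the same pattern. *)
lemma not_succeeds_few_patterns:
  assumes "2 * card (pattern qs ` {1..n}) < n"
  shows "\<not> succeeds n qs"
proof -
  obtain Rep where Rep: "Rep \<subseteq> {1..n}" "inj_on (pattern qs) Rep"
    "pattern qs ` Rep = pattern qs ` {1..n}"
    using subset_image_inj[of "pattern qs ` {1..n}" "pattern qs" "{1..n}"] by auto
  have small: "2 * card Rep < n"
    using assms card_image[OF Rep(2)] Rep(3) by simp
  define c where "c x \<longleftrightarrow> x \<notin> Rep" for x
  have blue: "{j \<in> {1..n}. \<not> c j} = Rep" and red: "{j \<in> {1..n}. c j} = {1..n} - Rep"
    unfolding c_def using Rep(1) by auto
  have no_blue_maj: "\<not> maj_ball n c' i" if "card {j \<in> {1..n}. \<not> c' j} = card Rep" "\<not> c' i" for c' i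
    using that small unfolding maj_ball_def by simp
  show ?thesis
  proof (rule not_succeedsI)
    show "consistent qs c c" by (rule consistent_refl)
    have "card ({1..n} - Rep) = n - card Rep"
      using Rep(1) by (simp add: card_Diff_subset finite_subset)
    then show "\<exists>i. maj_ball n c i"
      unfolding ex_maj_ball_iff balanced_def using red small by simp
    show "\<exists>c'. consistent qs c c' \<and> \<not> maj_ball n c' i" for i
    proof (cases "i \<in> {1..n} - Rep")
      case False
      then have "\<not> maj_ball n c i"
        using no_blue_maj[of c i] blue unfolding maj_ball_def c_def by auto
      then show ?thesis using consistent_refl by blast
    next
      case True
      then obtain y where y: "y \<in> Rep" "pattern qs y = pattern qs i"
        using Rep(3) by (metis Diff_iff imageE imageI)
      have "bij_betw (transpose i y) {1..n} {1..n}"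
        using True y(1) Rep(1) by auto
      then have "card {j \<in> {1..n}. \<not> (c \<circ> transpose i y) j} = card Rep"
        using card_filter_bij_betw[of "transpose i y" "{1..n}" "\<lambda>x. \<not> c x"] blue by simp
      moreover have "\<not> (c \<circ> transpose i y) i" using y(1) unfolding c_def by simp
      ultimately show ?thesis
        using no_blue_maj consistent_transpose[of qs i y c] y(2) by metis
    qed
  qed
qed

lemma succeeds_imp_le_pow:
  assumes "succeeds n qs"
  shows "n \<le> 2 * 2 ^ length qs"
proof -
  have "pattern qs ` {1..n} \<subseteq> Pow {..<length qs}" using pattern_subset by blast
  then have "card (pattern qs ` {1..n}) \<le> 2 ^ length qs"
    by (metis card_Pow card_lessThan card_mono finite_Pow_iff finite_lessThan)
  then show ?thesis using not_succeeds_few_patterns[of qs n] assms by linarith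
qed

lemma sum_card_pattern:
  assumes valid: "valid_queries k n qs"
  shows "(\<Sum>x\<in>{1..n}. card (pattern qs x)) = length qs * k"
proof -
  have card_pattern: "card (pattern qs x) = (\<Sum>j<length qs. of_bool (x \<in> qs ! j))" for x
    unfolding pattern_def by (simp add: Int_def conj_commute lessThan_def)
  have "(\<Sum>x\<in>{1..n}. card (pattern qs x)) = (\<Sum>x\<in>{1..n}. \<Sum>j<length qs. of_bool (x \<in> qs ! j))"
    by (simp only: card_pattern)
  also have "\<dots> = (\<Sum>j<length qs. \<Sum>x\<in>{1..n}. of_bool (x \<in> qs ! j))"
    by (rule sum.swap)
  also have "\<dots> = (\<Sum>j<length qs. k)"
  proof (rule sum.cong)
    fix j assume "j \<in> {..<length qs}"
    then have "qs ! j \<subseteq> {1..n}" "card (qs ! j) = k"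
      using valid_queries_nth[OF valid] by simp_all
    have "(\<Sum>x\<in>{1..n}. of_bool (x \<in> qs ! j)) = card ({1..n} \<inter> {x. x \<in> qs ! j})"
      using sum_of_bool_eq[of "{1..n}" "\<lambda>x. x \<in> qs ! j"] by simp
    also have "{1..n} \<inter> {x. x \<in> qs ! j} = qs ! j"
      using \<open>qs ! j \<subseteq> {1..n}\<close> by blast
    finally show "(\<Sum>x\<in>{1..n}. of_bool (x \<in> qs ! j)) = k"
      using \<open>card (qs ! j) = k\<close> by simp
  qed simp
  finally show ?thesis by simp
qed

section \<open>Cycles of balls\<close>

(* Balls are edges of a multigraph whose vertices are the queries (Some v) and one extra vertex
   None: ball x joins the queries in S x, completed by None when S x has fewer than two elements. *)
definition ball_path :: "('b \<Rightarrow> 'a set) \<Rightarrow> 'a option list \<Rightarrow> 'b list \<Rightarrow> bool" where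
  "ball_path S ws xs \<longleftrightarrow> length ws = Suc (length xs) \<and> distinct ws \<and> distinct xs \<and>
     (\<forall>j < length xs. S (xs ! j) = set_option (ws ! j) \<union> set_option (ws ! Suc j))"

definition ball_cycle :: "('b \<Rightarrow> 'a set) \<Rightarrow> 'a option list \<Rightarrow> 'b list \<Rightarrow> bool" where
  "ball_cycle S ws xs \<longleftrightarrow> xs \<noteq> [] \<and> length ws = length xs \<and> distinct ws \<and> distinct xs \<and>
     (length xs = 1 \<longrightarrow> ws = [None]) \<and>
     (\<forall>j < length xs. S (xs ! j) = set_option (ws ! j) \<union> set_option (ws ! (Suc j mod length xs)))"

lemma ball_cycle_loop: "S x = {} \<Longrightarrow> ball_cycle S [None] [x]"
  unfolding ball_cycle_def by simp

lemma distinct_option_list_length: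
  assumes "finite V" and "distinct ws" and "set ws \<subseteq> insert None (Some ` V)"
  shows "length ws \<le> Suc (card V)"
proof -
  have "length ws = card (set ws)" using assms(2) by (simp add: distinct_card)
  also have "\<dots> \<le> card (insert None (Some ` V))"
    using assms(1,3) by (intro card_mono) auto
  also have "\<dots> \<le> Suc (card V)"
    using assms(1) by (simp add: card_insert_if card_image)
  finally show ?thesis .
qed

lemma ball_path_last: "ball_path S ws xs \<Longrightarrow> last ws = ws ! length xs"
  unfolding ball_path_def by (metis diff_Suc_1 last_conv_nth list.size(3) nat.distinct(1))

lemma ball_path_snoc:
  assumes "ball_path S ws xs" and "w \<notin> set ws" and "y \<notin> set xs"
    and "S y = set_option (last ws) \<union> set_option w"
  shows "ball_path S (ws @ [w]) (xs @ [y])"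
proof -
  have "last ws = ws ! length xs" using assms(1) by (rule ball_path_last)
  then show ?thesis
    using assms unfolding ball_path_def by (auto simp: nth_append less_Suc_eq)
qed

lemma ball_path_close:
  assumes path: "ball_path S ws xs" and i: "i < length xs" and y: "y \<notin> set xs"
    and Sy: "S y = set_option (last ws) \<union> set_option (ws ! i)"
  shows "ball_cycle S (drop i ws) (drop i xs @ [y])"
proof -
  define L where "L = Suc (length xs - i)"
  have len: "length ws = Suc (length xs)" and Sx: "\<And>j. j < length xs \<Longrightarrow>
      S (xs ! j) = set_option (ws ! j) \<union> set_option (ws ! Suc j)"
    using path unfolding ball_path_def by auto
  have last: "last ws = ws ! length xs" using path by (rule ball_path_last)
  have edge: "S ((drop i xs @ [y]) ! j) = set_option (drop i ws ! j) \<union> set_option (drop i ws ! (Suc j mod L))"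
    if "j < L" for j
  proof (cases "j < length xs - i")
    case True
    then show ?thesis using Sx[of "i + j"] len i unfolding L_def by (simp add: nth_append)
  next
    case False
    then have "j = length xs - i" using that unfolding L_def by simp
    then show ?thesis using Sy last len i unfolding L_def by (simp add: nth_append)
  qed
  have "length (drop i ws) = L" "length (drop i xs @ [y]) = L" "L \<noteq> 1"
    using len i unfolding L_def by auto
  moreover have "distinct (drop i ws)" "distinct (drop i xs @ [y])"
    using path y unfolding ball_path_def by (auto dest: in_set_dropD)
  ultimately show ?thesis
    unfolding ball_cycle_def using edge by simp
qed

lemma ball_path_last_ball:
  assumes path: "ball_path S ws xs" and "last ws = Some v" and "y \<in> set xs" and "v \<in> S y"
  shows "y = last xs"
proof -
  have len: "length ws = Suc (length xs)" and dist: "distinct ws"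
    using path unfolding ball_path_def by auto
  have v: "ws ! length xs = Some v"
    using assms(2) ball_path_last[OF path] by simp
  obtain j where j: "j < length xs" "y = xs ! j" using assms(3) by (metis in_set_conv_nth)
  then have "ws ! j = Some v \<or> ws ! Suc j = Some v"
    using path assms(4) unfolding ball_path_def by auto
  moreover have "ws ! j \<noteq> ws ! length xs"
    using j(1) len dist by (simp add: nth_eq_iff_index_eq)
  ultimately have "ws ! Suc j = ws ! length xs" using v by simp
  then have "length xs = Suc j"
    using j(1) len dist by (simp add: nth_eq_iff_index_eq)
  moreover have "xs \<noteq> []" using j(1) by auto
  ultimately show ?thesis using j(2) by (simp add: last_conv_nth)
qed

lemma card_le_two_insert:
  assumes "finite A" and "card A \<le> 2" and "v \<in> A"
  obtains w where "A = insert v (set_option w)" and "w \<noteq> Some v"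
proof (cases "A = {v}")
  case True
  then show ?thesis using that[of None] by simp
next
  case False
  then obtain u where u: "u \<in> A" "u \<noteq> v" using assms(3) by blast
  then have "card {v, u} = 2" by simp
  then have "A = {v, u}"
    using assms u by (metis card_subset_eq empty_subsetI insert_subset le_antisym card_mono)
  then show ?thesis using that[of "Some u"] u(2) by simp
qed

lemma ball_path_next_ball:
  assumes path: "ball_path S ws xs" and v: "last ws = Some v"
    and ab: "a \<in> B" "b \<in> B" "a \<noteq> b" "v \<in> S a" "v \<in> S b"
    and edges: "\<forall>x\<in>B. finite (S x) \<and> card (S x) \<le> 2"
  obtains y w where "y \<in> B" and "y \<notin> set xs" and "S y = insert v (set_option w)" and "w \<noteq> Some v"
proof -
  define y where "y = (if xs \<noteq> [] \<and> a = last xs then b else a)"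
  have y: "y \<in> B" "v \<in> S y" "xs \<noteq> [] \<Longrightarrow> y \<noteq> last xs"
    unfolding y_def using ab by auto
  have "y \<notin> set xs"
  proof
    assume y_xs: "y \<in> set xs"
    then have "xs \<noteq> []" by auto
    then show False using ball_path_last_ball[OF path v y_xs y(2)] y(3) by simp
  qed
  moreover obtain w where "S y = insert v (set_option w)" and "w \<noteq> Some v"
    using card_le_two_insert[of "S y" v] edges y(1,2) by blast
  ultimately show ?thesis using that y(1) by blast
qed

lemma ball_path_extend:
  assumes path: "ball_path S ws xs" and v: "last ws = Some v" and y: "y \<notin> set xs"
    and Sy: "S y = insert v (set_option w)" and w: "w \<noteq> Some v"
  shows "(\<exists>i < length xs. ball_cycle S (drop i ws) (drop i xs @ [y])) \<or>
    (w \<notin> set ws \<and> ball_path S (ws @ [w]) (xs @ [y]))"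
proof (cases "w \<in> set ws")
  case True
  then obtain i where i: "i < length ws" "ws ! i = w" by (meson in_set_conv_nth)
  moreover have "i \<noteq> length xs" using ball_path_last[OF path] v w i(2) by auto
  ultimately have "i < length xs" using path unfolding ball_path_def by simp
  then show ?thesis using ball_path_close[OF path _ y] Sy v i(2) by auto
next
  case False
  then show ?thesis using ball_path_snoc[OF path False y] Sy v by simp
qed

lemma exists_longest:
  assumes "P ws\<^sub>0 xs\<^sub>0" and "\<And>ws xs. P ws xs \<Longrightarrow> length xs \<le> b"
  obtains ws xs where "P ws xs" and "\<And>ws' xs'. P ws' xs' \<Longrightarrow> length xs' \<le> length xs"
proof -
  have "\<exists>m. (\<exists>ws xs. P ws xs \<and> length xs = m) \<and> (\<forall>m'. (\<exists>ws xs. P ws xs \<and> length xs = m') \<longrightarrow> m' \<le> m)"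
    using assms by (intro Nat.ex_has_greatest_nat[where k = "length xs\<^sub>0" and b = b]) blast+
  then show ?thesis using that by blast
qed

lemma ball_path_step:
  assumes V: "finite V" and edges: "\<forall>x\<in>B. S x \<subseteq> V \<and> card (S x) \<le> 2"
    and degree: "\<forall>v\<in>V. \<exists>x\<in>B. \<exists>x'\<in>B. x \<noteq> x' \<and> v \<in> S x \<and> v \<in> S x'"
    and path: "ball_path S ws xs" and xsB: "set xs \<subseteq> B" and wsV: "set ws \<subseteq> insert None (Some ` V)"
    and v: "last ws = Some v" and H: "(\<exists>x\<in>B. card (S x) = 1) \<Longrightarrow> None \<in> set ws"
  shows "(\<exists>ws' xs'. ball_cycle S ws' xs' \<and> set xs' \<subseteq> B \<and> set ws' \<subseteq> insert None (Some ` V)) \<or>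
    (\<exists>w y. w \<in> Some ` V \<and> y \<in> B \<and> ball_path S (ws @ [w]) (xs @ [y]))"
proof -
  have "ws \<noteq> []" using path unfolding ball_path_def by auto
  then have "Some v \<in> set ws" using v last_in_set by metis
  then obtain a b where ab: "a \<in> B" "b \<in> B" "a \<noteq> b" "v \<in> S a" "v \<in> S b"
    using degree wsV by blast
  have "\<forall>x\<in>B. finite (S x) \<and> card (S x) \<le> 2" using edges V finite_subset by blast
  then obtain y w where y: "y \<in> B" "y \<notin> set xs"
    and Sy: "S y = insert v (set_option w)" and w: "w \<noteq> Some v"
    using ball_path_next_ball[OF path v ab] by blast
  have "set (drop i xs @ [y]) \<subseteq> B \<and> set (drop i ws) \<subseteq> insert None (Some ` V)" for i
    using xsB y(1) wsV by (auto dest: in_set_dropD)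
  moreover have "w \<in> Some ` V" if "w \<notin> set ws"
  proof -
    have "w \<noteq> None"
    proof
      assume "w = None"
      then have "card (S y) = 1" using Sy by simp
      then show False using H y(1) that \<open>w = None\<close> by blast
    qed
    then show ?thesis using Sy edges y(1) by auto
  qed
  ultimately show ?thesis using ball_path_extend[OF path v y(2) Sy w] y(1) by blast
qed

lemma ball_cycle_exists_min_degree:
  assumes V: "finite V" and edges: "\<forall>x\<in>B. S x \<subseteq> V \<and> S x \<noteq> {} \<and> card (S x) \<le> 2"
    and "B \<noteq> {}" and degree: "\<forall>v\<in>V. \<exists>x\<in>B. \<exists>x'\<in>B. x \<noteq> x' \<and> v \<in> S x \<and> v \<in> S x'"
  shows "\<exists>ws xs. ball_cycle S ws xs \<and> set xs \<subseteq> B \<and> set ws \<subseteq> insert None (Some ` V)"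
proof -
  define H where "H \<longleftrightarrow> (\<exists>x\<in>B. card (S x) = 1)"
  \<comment> \<open>Paths ending in a query; they start at \<open>None\<close> when some ball lies in a single query,
    so that such a ball can close a cycle through \<open>None\<close>.\<close>
  define good where "good ws xs \<longleftrightarrow> ball_path S ws xs \<and> set xs \<subseteq> B \<and>
      set ws \<subseteq> insert None (Some ` V) \<and> last ws \<noteq> None \<and> (H \<longrightarrow> None \<in> set ws)" for ws xs
  have "\<exists>ws xs. good ws xs"
  proof (cases H)
    case True
    then obtain h v where "h \<in> B" "S h = {v}" unfolding H_def by (meson card_1_singletonE)
    then have "good [None, Some v] [h]"
      using True edges unfolding good_def ball_path_def by (auto simp: nth_Cons split: nat.split)
    then show ?thesis by blast
  next
    case False
    obtain x v where "x \<in> B" "v \<in> S x" using \<open>B \<noteq> {}\<close> edges by blast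
    then have "good [Some v] []"
      using False edges unfolding good_def ball_path_def by auto
    then show ?thesis by blast
  qed
  moreover have "length xs \<le> card V" if "good ws xs" for ws xs
    using that distinct_option_list_length[OF V, of ws] unfolding good_def ball_path_def by simp
  ultimately obtain ws xs where good: "good ws xs"
    and longest: "\<And>ws' xs'. good ws' xs' \<Longrightarrow> length xs' \<le> length xs"
    by (metis exists_longest)
  then have path: "ball_path S ws xs" and xsB: "set xs \<subseteq> B"
    and wsV: "set ws \<subseteq> insert None (Some ` V)" and H: "H \<Longrightarrow> None \<in> set ws"
    unfolding good_def by auto
  obtain v where v: "last ws = Some v" using good unfolding good_def by auto
  have "\<forall>x\<in>B. S x \<subseteq> V \<and> card (S x) \<le> 2" using edges by blast
  note step = ball_path_step[OF V this degree path xsB wsV v H[unfolded H_def]]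
  have "\<not> good (ws @ [w]) (xs @ [y])" for w y
    using longest[of "ws @ [w]" "xs @ [y]"] by fastforce
  then show ?thesis using step xsB wsV H unfolding good_def by fastforce
qed

lemma ball_cycle_exists:
  assumes "finite V" and "finite B" and "\<forall>x\<in>B. S x \<subseteq> V \<and> card (S x) \<le> 2" and "card V < card B"
  shows "\<exists>ws xs. ball_cycle S ws xs \<and> set xs \<subseteq> B \<and> set ws \<subseteq> insert None (Some ` V)"
  using assms
proof (induction "card V" arbitrary: V B rule: less_induct)
  case less
  show ?case
  proof (cases "\<exists>x\<in>B. S x = {}")
    case True
    then obtain x where "x \<in> B" "S x = {}" by blast
    then show ?thesis using ball_cycle_loop[of S x] by (intro exI[of _ "[None]"] exI[of _ "[x]"]) simp
  next
    case nonempty: False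
    show ?thesis
    proof (cases "\<forall>v\<in>V. \<exists>x\<in>B. \<exists>x'\<in>B. x \<noteq> x' \<and> v \<in> S x \<and> v \<in> S x'")
      case True
      have "\<forall>x\<in>B. S x \<subseteq> V \<and> S x \<noteq> {} \<and> card (S x) \<le> 2" using less.prems(3) nonempty by blast
      moreover have "B \<noteq> {}" using less.prems(4) by auto
      ultimately show ?thesis by (rule ball_cycle_exists_min_degree[OF less.prems(1) _ _ True])
    next
      case False
      then obtain v where v: "v \<in> V" and leaf: "\<forall>x\<in>B. \<forall>x'\<in>B. v \<in> S x \<and> v \<in> S x' \<longrightarrow> x = x'"
        by blast
      define B' where "B' = {x \<in> B. v \<notin> S x}"
      have "card {x \<in> B. v \<in> S x} \<le> 1"
        using leaf less.prems(2) by (simp add: card_le_Suc0_iff_eq)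
      moreover have "card {x \<in> B. v \<in> S x} + card B' = card B"
        unfolding B'_def by (rule card_filter_add_card_filter_not[OF less.prems(2)])
      moreover have card_V: "card (V - {v}) + 1 = card V"
        using card_Suc_Diff1[OF less.prems(1) v] by simp
      ultimately have "card (V - {v}) < card B'" using less.prems(4) by linarith
      moreover have "\<forall>x\<in>B'. S x \<subseteq> V - {v} \<and> card (S x) \<le> 2"
        using less.prems(3) unfolding B'_def by blast
      moreover have "finite B'" unfolding B'_def using less.prems(2) by simp
      moreover have "card (V - {v}) < card V" using card_V by simp
      ultimately obtain ws xs where "ball_cycle S ws xs" "set xs \<subseteq> B'"
          "set ws \<subseteq> insert None (Some ` (V - {v}))"
        using less.hyps[of "V - {v}" B'] less.prems(1) by auto
      moreover have "B' \<subseteq> B" unfolding B'_def by blast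
      ultimately show ?thesis by blast
    qed
  qed
qed

lemma ball_cycle_incident_iff:
  assumes cycle: "ball_cycle S ws xs" and "i < length xs" and "j < length xs" and "ws ! j = Some v"
  shows "v \<in> S (xs ! i) \<longleftrightarrow> i = j \<or> i = (if j = 0 then length xs - 1 else j - 1)"
proof -
  have len: "length ws = length xs" and dist: "distinct ws"
    and Sx: "S (xs ! i) = set_option (ws ! i) \<union> set_option (ws ! (Suc i mod length xs))"
    using cycle assms(2) unfolding ball_cycle_def by auto
  have "Suc i mod length xs < length xs" by (rule mod_less_divisor) (use assms(2) in linarith)
  then have "ws ! (Suc i mod length xs) = Some v \<longleftrightarrow> Suc i mod length xs = j"
    and "ws ! i = Some v \<longleftrightarrow> i = j"
    using assms(2-4) len dist by (simp_all add: nth_eq_iff_index_eq flip: assms(4))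
  moreover have "v \<in> set_option w \<longleftrightarrow> w = Some v" for w by (cases w) auto
  ultimately have "v \<in> S (xs ! i) \<longleftrightarrow> i = j \<or> Suc i mod length xs = j"
    using Sx by blast
  also have "Suc i mod length xs = j \<longleftrightarrow> i = (if j = 0 then length xs - 1 else j - 1)"
    using assms(2,3) by (cases "Suc i = length xs") auto
  finally show ?thesis .
qed

lemma ball_cycle_incident_in_set:
  assumes "ball_cycle S ws xs" and "i < length xs" and "v \<in> S (xs ! i)"
  shows "Some v \<in> set ws"
proof -
  have "ws ! i = Some v \<or> ws ! (Suc i mod length xs) = Some v"
    using assms unfolding ball_cycle_def by (auto split: option.splits)
  moreover have "i < length ws" "Suc i mod length xs < length ws"
    using assms(1,2) unfolding ball_cycle_def by auto
  ultimately show ?thesis by (metis nth_mem)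
qed

lemma ball_cycle_incident_balls:
  assumes cycle: "ball_cycle S ws xs" and j: "j < length xs" and v: "ws ! j = Some v"
  defines "j' \<equiv> if j = 0 then length xs - 1 else j - 1"
  shows "{x \<in> set xs. v \<in> S x} = {xs ! j, xs ! j'}" and "xs ! j \<noteq> xs ! j'"
proof -
  have "length xs \<noteq> 1" using cycle v j unfolding ball_cycle_def by auto
  then have j': "j' < length xs" "j' \<noteq> j" using j unfolding j'_def by auto
  show "{x \<in> set xs. v \<in> S x} = {xs ! j, xs ! j'}"
    using ball_cycle_incident_iff[OF cycle _ j v] j j' unfolding j'_def
    by (auto simp: in_set_conv_nth)
  show "xs ! j \<noteq> xs ! j'"
    using cycle j j' unfolding ball_cycle_def by (simp add: nth_eq_iff_index_eq)
qed

section \<open>Flipping an alternately coloured cycle\<close>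

(* The balls xs ! (j - 1) and xs ! j of a cycle share the query ws ! j. They get different colours
   except for j = 0 and, when the length L is even, j = 1; the colour classes are unbalanced. *)
definition cycle_colour :: "nat \<Rightarrow> nat \<Rightarrow> bool" where
  "cycle_colour L i \<longleftrightarrow> odd i \<or> (even L \<and> i = 0)"

lemma cycle_colour_alternates:
  assumes "0 < j" and "\<not> (even L \<and> j = 1)"
  shows "cycle_colour L j \<noteq> cycle_colour L (j - 1)"
  using assms unfolding cycle_colour_def by (cases j) auto

lemma card_odd_less: "card {i. i < L \<and> odd i} = L div 2"
proof (induction L)
  case (Suc L)
  have "{i. i < Suc L \<and> odd i} = (if odd L then insert L {i. i < L \<and> odd i} else {i. i < L \<and> odd i})"
    by (auto simp: less_Suc_eq)
  then show ?case using Suc by simp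
qed simp

lemma card_cycle_colour:
  assumes "0 < L"
  shows "card {i. i < L \<and> cycle_colour L i} = (if even L then L div 2 + 1 else L div 2)"
proof (cases "even L")
  case True
  then have "{i. i < L \<and> cycle_colour L i} = insert 0 {i. i < L \<and> odd i}"
    using assms unfolding cycle_colour_def by auto
  then show ?thesis using True card_odd_less[of L] by simp
next
  case False
  then have "{i. i < L \<and> cycle_colour L i} = {i. i < L \<and> odd i}"
    unfolding cycle_colour_def by auto
  then show ?thesis using False card_odd_less[of L] by simp
qed

lemma exists_cycle_colour_set:
  assumes "distinct xs" and "xs \<noteq> []"
  obtains R where "R \<subseteq> set xs" and "\<And>i. i < length xs \<Longrightarrow> xs ! i \<in> R \<longleftrightarrow> cycle_colour (length xs) i"
    and "2 * card R \<noteq> length xs" and "2 * card R \<le> length xs + 2" and "length xs \<le> 2 * card R + 1"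
proof -
  define L where "L = length xs"
  define R where "R = (\<lambda>i. xs ! i) ` {i. i < L \<and> cycle_colour L i}"
  have "R \<subseteq> set xs" unfolding R_def L_def by auto
  moreover have "xs ! i \<in> R \<longleftrightarrow> cycle_colour L i" if "i < L" for i
    using that assms(1) unfolding R_def L_def by (auto simp: nth_eq_iff_index_eq)
  moreover have "card R = card {i. i < L \<and> cycle_colour L i}"
    unfolding R_def L_def by (rule card_image) (use inj_on_nth[OF assms(1)] in auto)
  then have "card R = (if even L then L div 2 + 1 else L div 2)"
    using card_cycle_colour assms(2) unfolding L_def by simp
  then have "2 * card R \<noteq> L" "2 * card R \<le> L + 2" "L \<le> 2 * card R + 1"
    by presburger+
  ultimately show ?thesis using that unfolding L_def by blast
qed

lemma ball_cycle_query:
  assumes valid: "valid_queries k n qs" and cycle: "ball_cycle (pattern qs) ws xs"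
    and j: "j < length xs" and v: "ws ! j = Some v"
  defines "j' \<equiv> if j = 0 then length xs - 1 else j - 1"
  shows "v < length qs" and "qs ! v \<inter> set xs = {xs ! j, xs ! j'}" and "xs ! j \<noteq> xs ! j'"
    and "card (qs ! v - set xs) + 2 = k"
proof -
  have "v \<in> pattern qs (xs ! j)"
    using cycle j v unfolding ball_cycle_def by auto
  then show v_lt: "v < length qs" unfolding pattern_def by simp
  then have "qs ! v \<inter> set xs = {x \<in> set xs. v \<in> pattern qs x}"
    unfolding pattern_def by auto
  then show inter: "qs ! v \<inter> set xs = {xs ! j, xs ! j'}" and "xs ! j \<noteq> xs ! j'"
    using ball_cycle_incident_balls[OF cycle j v] unfolding j'_def by simp_all
  moreover have "finite (qs ! v)" "card (qs ! v) = k"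
    using valid_queries_nth[OF valid v_lt] by simp_all
  ultimately show "card (qs ! v - set xs) + 2 = k"
    using card_Int_Diff[of "qs ! v" "set xs"] by simp
qed

lemma ball_cycle_query_balanced:
  assumes valid: "valid_queries k n qs" and cycle: "ball_cycle (pattern qs) ws xs"
    and colour: "\<And>i. i < length xs \<Longrightarrow> c (xs ! i) = cycle_colour (length xs) i"
    and v: "v < length qs" and "ws ! 0 \<noteq> Some v" and "even (length xs) \<Longrightarrow> ws ! 1 \<noteq> Some v"
  shows "balanced c (qs ! v \<inter> set xs)"
proof (cases "Some v \<in> set ws")
  case False
  have "qs ! v \<inter> set xs = {}"
  proof (rule ccontr)
    assume "qs ! v \<inter> set xs \<noteq> {}"
    then obtain i where i: "i < length xs" "xs ! i \<in> qs ! v" by (auto simp: in_set_conv_nth)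
    then have "v \<in> pattern qs (xs ! i)" using v unfolding pattern_def by simp
    then show False using ball_cycle_incident_in_set[OF cycle i(1)] False by blast
  qed
  then show ?thesis unfolding balanced_def by simp
next
  case True
  then obtain j where j: "j < length xs" "ws ! j = Some v"
    using cycle unfolding ball_cycle_def by (metis in_set_conv_nth)
  then have "0 < j" "\<not> (even (length xs) \<and> j = 1)" using assms(5,6) by (auto intro: gr0I)
  then have "cycle_colour (length xs) j \<noteq> cycle_colour (length xs) (j - 1)"
    by (rule cycle_colour_alternates)
  then have "c (xs ! j) \<noteq> c (xs ! (j - 1))" using colour j(1) by simp
  then show ?thesis
    using ball_cycle_query[OF valid cycle j] \<open>0 < j\<close> balanced_pair by simp
qed

lemma ball_cycle_colouring:
  assumes valid: "valid_queries k n qs" and "even k" and "0 < k" and "even n"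
    and cycle: "ball_cycle (pattern qs) ws xs" and xs_n: "set xs \<subseteq> {1..n}"
    and long: "length xs + 2 * k \<le> n"
  obtains c where "balanced c {1..n}" and "\<not> balanced c (set xs)"
    and "\<And>i. i < length xs \<Longrightarrow> c (xs ! i) = cycle_colour (length xs) i"
    and "\<And>j v. j = 0 \<or> (even (length xs) \<and> j = 1) \<Longrightarrow> ws ! j = Some v \<Longrightarrow> balanced c (qs ! v - set xs)"
proof -
  define L where "L = length xs"
  define F where "F = set xs"
  have L: "0 < L" "distinct xs" using cycle unfolding ball_cycle_def L_def by auto
  have card_F: "card F = L" unfolding F_def L_def using L(2) by (simp add: distinct_card)
  obtain R\<^sub>F where R\<^sub>F: "R\<^sub>F \<subseteq> F" and colour: "\<And>i. i < L \<Longrightarrow> xs ! i \<in> R\<^sub>F \<longleftrightarrow> cycle_colour L i"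
    and card_R\<^sub>F: "2 * card R\<^sub>F \<noteq> L" "2 * card R\<^sub>F \<le> L + 2" "L \<le> 2 * card R\<^sub>F + 1"
    using exists_cycle_colour_set[OF L(2)] L(1) unfolding L_def F_def by auto
  define defect where "defect j = (case ws ! j of None \<Rightarrow> {} | Some v \<Rightarrow> qs ! v - F)" for j
  have defect: "defect j \<subseteq> {1..n} - F \<and> even (card (defect j)) \<and> card (defect j) \<le> k - 2"
    if "j < L" for j
  proof (cases "ws ! j")
    case (Some v)
    then have "v < length qs" "card (qs ! v - F) + 2 = k"
      using ball_cycle_query[OF valid cycle] that unfolding L_def F_def by auto
    moreover have "qs ! v \<subseteq> {1..n}" using valid_queries_nth[OF valid \<open>v < length qs\<close>] by simp
    ultimately show ?thesis unfolding defect_def using Some \<open>even k\<close> by auto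
  qed (simp add: defect_def)
  define j\<^sub>2 :: nat where "j\<^sub>2 = (if even L then 1 else 0)"
  have "j\<^sub>2 < L" using L(1) unfolding j\<^sub>2_def by (auto elim: evenE)
  note defects = defect[OF L(1)] defect[OF \<open>j\<^sub>2 < L\<close>]
  have "card (defect 0 \<union> defect j\<^sub>2) \<le> card (defect 0) + card (defect j\<^sub>2)"
    by (rule card_Un_le)
  then have "card (defect 0 \<union> defect j\<^sub>2) + 2 \<le> 2 * k" using defects \<open>0 < k\<close> by linarith
  then have small: "card (defect 0 \<union> defect j\<^sub>2) + 2 * card R\<^sub>F \<le> card {1..n}"
    and large: "card (defect 0 \<union> defect j\<^sub>2) + 2 * card F \<le> card {1..n} + 2 * card R\<^sub>F"
    using card_F card_R\<^sub>F long unfolding L_def by simp_all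
  have "F \<subseteq> {1..n}" using xs_n unfolding F_def .
  then obtain c where c_F: "\<And>x. x \<in> F \<Longrightarrow> c x \<longleftrightarrow> x \<in> R\<^sub>F" and "balanced c {1..n}"
      and bal: "balanced c (defect 0)" "balanced c (defect j\<^sub>2)"
    using exists_balanced_colouring[OF _ _ R\<^sub>F _ _ _ _ small large] defects \<open>even n\<close> by auto
  moreover have "{x \<in> F. c x} = R\<^sub>F" using c_F R\<^sub>F by auto
  then have "\<not> balanced c F" unfolding balanced_def using card_F card_R\<^sub>F by simp
  moreover have "c (xs ! i) = cycle_colour L i" if "i < L" for i
    using c_F colour that unfolding F_def L_def by simp
  moreover have "balanced c (qs ! v - F)" if "j = 0 \<or> (even L \<and> j = 1)" "ws ! j = Some v" for j v
    using bal that unfolding defect_def j\<^sub>2_def by auto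
  ultimately show ?thesis using that unfolding L_def F_def by blast
qed

lemma ball_cycle_fails:
  assumes valid: "valid_queries k n qs" and "even k" and "0 < k" and "even n"
    and cycle: "ball_cycle (pattern qs) ws xs" and xs_n: "set xs \<subseteq> {1..n}"
    and long: "length xs + 2 * k \<le> n"
  shows "\<not> succeeds n qs"
proof -
  obtain c where bal: "balanced c {1..n}" and unbal: "\<not> balanced c (set xs)"
    and colour: "\<And>i. i < length xs \<Longrightarrow> c (xs ! i) = cycle_colour (length xs) i"
    and defect: "\<And>j v. j = 0 \<or> (even (length xs) \<and> j = 1) \<Longrightarrow> ws ! j = Some v \<Longrightarrow>
      balanced c (qs ! v - set xs)"
    using ball_cycle_colouring[OF assms] by blast
  show ?thesis
  proof (rule not_succeeds_flip_on[OF bal xs_n unbal])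
    fix Q assume "Q \<in> set qs"
    then obtain v where v: "v < length qs" "Q = qs ! v" by (metis in_set_conv_nth)
    have "finite Q" using valid_queries_nth[OF valid v(1)] v(2) by simp
    moreover have "balanced c (Q \<inter> set xs) \<or> balanced c (Q - set xs)"
      using defect[of 0 v] defect[of 1 v] ball_cycle_query_balanced[OF valid cycle colour v(1)] v(2)
      by blast
    ultimately show "finite Q \<and> (balanced c (Q \<inter> set xs) \<or> balanced c (Q - set xs))" by blast
  qed
qed

section \<open>The lower bound\<close>

definition sparse_balls :: "nat set list \<Rightarrow> nat \<Rightarrow> nat set" where
  "sparse_balls qs n = {x \<in> {1..n}. card (pattern qs x) \<le> 2}"

lemma succeeds_imp_le_of_cycle:
  assumes valid: "valid_queries k n qs" and succ: "succeeds n qs"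
    and "even k" and "0 < k" and "even n"
    and B: "(\<exists>x\<in>sparse_balls qs n. pattern qs x = {}) \<or> length qs < card (sparse_balls qs n)"
  shows "n \<le> length qs + 2 * k"
proof -
  define q where "q = length qs"
  obtain ws xs where cycle: "ball_cycle (pattern qs) ws xs" and xs: "set xs \<subseteq> sparse_balls qs n"
    and ws: "set ws \<subseteq> insert None (Some ` {..<q})"
  proof (cases "\<exists>x\<in>sparse_balls qs n. pattern qs x = {}")
    case True
    then obtain x where "x \<in> sparse_balls qs n" "pattern qs x = {}" by blast
    then show ?thesis using that[of "[None]" "[x]"] ball_cycle_loop[of "pattern qs" x] by simp
  next
    case False
    then have "card {..<q} < card (sparse_balls qs n)" using B unfolding q_def by simp
    moreover have "\<forall>x\<in>sparse_balls qs n. pattern qs x \<subseteq> {..<q} \<and> card (pattern qs x) \<le> 2"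
      using pattern_subset unfolding sparse_balls_def q_def by blast
    moreover have "finite (sparse_balls qs n)" unfolding sparse_balls_def by simp
    ultimately show ?thesis
      using ball_cycle_exists[OF finite_lessThan, of "sparse_balls qs n" "pattern qs"] that by blast
  qed
  have "set xs \<subseteq> {1..n}" using xs unfolding sparse_balls_def by blast
  then have "\<not> length xs + 2 * k \<le> n"
    using ball_cycle_fails[OF valid \<open>even k\<close> \<open>0 < k\<close> \<open>even n\<close> cycle] succ by blast
  moreover have "length xs \<le> Suc q"
    using distinct_option_list_length[OF finite_lessThan _ ws] cycle unfolding ball_cycle_def by simp
  ultimately show ?thesis unfolding q_def by linarith
qed

lemma three_mul_le_of_sparse:
  assumes valid: "valid_queries k n qs" and nonempty: "\<forall>x\<in>sparse_balls qs n. pattern qs x \<noteq> {}"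
  shows "3 * n \<le> length qs * k + 2 * card (sparse_balls qs n)"
proof -
  define B where "B = sparse_balls qs n"
  have B: "B \<subseteq> {1..n}" unfolding B_def sparse_balls_def by blast
  have "1 \<le> card (pattern qs x)" if "x \<in> B" for x
    using nonempty that finite_subset[OF pattern_subset finite_lessThan]
    unfolding B_def by (simp add: Suc_le_eq card_gt_0_iff)
  then have "card B \<le> (\<Sum>x\<in>B. card (pattern qs x))"
    using sum_bounded_below[of B 1 "\<lambda>x. card (pattern qs x)"] by simp
  moreover have "3 \<le> card (pattern qs x)" if "x \<in> {1..n} - B" for x
    using that unfolding B_def sparse_balls_def by auto
  then have "card ({1..n} - B) * 3 \<le> (\<Sum>x\<in>{1..n} - B. card (pattern qs x))"
    using sum_bounded_below[of "{1..n} - B" 3 "\<lambda>x. card (pattern qs x)"] by simp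
  moreover have "(\<Sum>x\<in>{1..n}. card (pattern qs x)) =
      (\<Sum>x\<in>{1..n} - B. card (pattern qs x)) + (\<Sum>x\<in>B. card (pattern qs x))"
    using B by (simp add: sum.subset_diff)
  moreover have "card B \<le> n" using card_mono[OF finite_atLeastAtMost B] by simp
  then have "card ({1..n} - B) + card B = n"
    using B by (simp add: card_Diff_subset finite_subset)
  ultimately show ?thesis using sum_card_pattern[OF valid] unfolding B_def by linarith
qed

lemma succeeds_imp_query_bound:
  assumes valid: "valid_queries k n qs" and succ: "succeeds n qs"
    and "even k" and "even n" and k: "2 ^ 14 \<le> k" and "k \<le> n"
  shows "3 * n \<le> length qs * (k + 2)"
proof -
  define q where "q = length qs"
  \<comment> \<open>For \<open>k \<le> n < 4 * k\<close> only the pattern count helps; this is why \<open>k \<ge> 2 ^ 14\<close>.\<close>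
  have "13 \<le> q"
  proof (rule ccontr)
    assume "\<not> 13 \<le> q"
    then have "(2::nat) ^ q \<le> 2 ^ 12" by (intro power_increasing) simp_all
    then have "n \<le> 2 ^ 13" using succeeds_imp_le_pow[OF succ] unfolding q_def by simp
    then show False using k \<open>k \<le> n\<close> by simp
  qed
  show ?thesis
  proof (cases "(\<exists>x\<in>sparse_balls qs n. pattern qs x = {}) \<or> q < card (sparse_balls qs n)")
    case True
    then have "n \<le> q + 2 * k"
      using succeeds_imp_le_of_cycle[OF valid succ \<open>even k\<close> _ \<open>even n\<close>] k unfolding q_def by simp
    show ?thesis
    proof (cases "n < 4 * k")
      case True
      then have "3 * n \<le> 12 * k" by simp
      also have "\<dots> \<le> q * k" using \<open>13 \<le> q\<close> by simp
      finally show ?thesis unfolding q_def by (simp add: algebra_simps)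
    next
      case False
      then have "3 * n \<le> 6 * q" using \<open>n \<le> q + 2 * k\<close> by linarith
      also have "\<dots> \<le> q * (k + 2)" using k by simp
      finally show ?thesis unfolding q_def .
    qed
  next
    case False
    then have "3 * n \<le> q * k + 2 * card (sparse_balls qs n)" "card (sparse_balls qs n) \<le> q"
      using three_mul_le_of_sparse[OF valid] unfolding q_def by simp_all
    then show ?thesis unfolding q_def by (simp add: algebra_simps)
  qed
qed

lemma N_CM_cases:
  obtains "N_CM k n = \<infinity>"
    | qs where "valid_queries k n qs" and "succeeds n qs" and "N_CM k n = enat (length qs)"
proof (cases "{qs. valid_queries k n qs \<and> succeeds n qs} = {}")
  case True
  then show ?thesis using that(1) unfolding N_CM_def True by (simp add: top_enat_def)
next
  case False
  define A where "A = (\<lambda>qs. enat (length qs)) ` {qs. valid_queries k n qs \<and> succeeds n qs}"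
  have "A \<noteq> {}" using False unfolding A_def by blast
  have "N_CM k n = Inf A" unfolding N_CM_def A_def ..
  also have "\<dots> = (LEAST x. x \<in> A)" using \<open>A \<noteq> {}\<close> by (simp add: Inf_enat_def)
  finally have "N_CM k n = (LEAST x. x \<in> A)" .
  moreover have "(LEAST x. x \<in> A) \<in> A"
    by (rule LeastI_ex) (use False in \<open>auto simp: A_def\<close>)
  ultimately show ?thesis using that(2) unfolding A_def by auto
qed

lemma ereal_le_N_CM:
  assumes "\<And>qs. valid_queries k n qs \<Longrightarrow> succeeds n qs \<Longrightarrow> x \<le> real (length qs)"
  shows "ereal x \<le> ereal_of_enat (N_CM k n)"
  by (cases k n rule: N_CM_cases) (use assms in auto)

lemma N_CM_ge_three_div:
  assumes "even k" and "even n" and "2 ^ 14 \<le> k"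
  shows "ereal (3 * real n / (real k + 2)) \<le> ereal_of_enat (N_CM k n)"
proof (rule ereal_le_N_CM)
  fix qs assume valid: "valid_queries k n qs" and succ: "succeeds n qs"
  show "3 * real n / (real k + 2) \<le> real (length qs)"
  proof (cases "k \<le> n")
    case True
    then have "real (3 * n) \<le> real (length qs * (k + 2))"
      using succeeds_imp_query_bound[OF valid succ assms(1,2,3)] by (simp only: of_nat_le_iff)
    then show ?thesis by (simp add: divide_le_eq algebra_simps)
  next
    case False
    have "qs = []"
    proof (rule ccontr)
      assume "qs \<noteq> []"
      then have "qs ! 0 \<subseteq> {1..n}" "card (qs ! 0) = k"
        using valid_queries_nth[OF valid, of 0] by simp_all
      then have "k \<le> n" using card_mono[OF finite_atLeastAtMost, of "qs ! 0" 1 n] by simp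
      then show False using False by simp
    qed
    then have "n = 0" using not_succeeds_Nil[OF assms(2)] succ by auto
    then show ?thesis by simp
  qed
qed

lemma theorem8_bound_le_three_div:
  fixes i k n :: real
  assumes "1 \<le> i" and "i \<le> k" and "2 \<le> k" and "0 \<le> n"
  shows "(n * (5 * i * k - k + i + i\<^sup>2) - 2 * (k - i)) / ((2 * k + 3 + i) * i * k) \<le> 3 * n / (k + 2)"
proof -
  define P where "P = 5 * i * k - k + i + i\<^sup>2"
  define D where "D = (2 * k + 3 + i) * i * k"
  have "D > 0" unfolding D_def using assms by simp
  have "3 * D - (k + 2) * P = i * k * (k - 2) + 2 * (i * i * (k - 1)) + k * k + 2 * (k - i)"
    unfolding P_def D_def by (simp add: algebra_simps power2_eq_square)
  also have "\<dots> \<ge> 0" using assms by simp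
  finally have "(k + 2) * P \<le> 3 * D" by simp
  then have "(k + 2) * (n * P) \<le> (3 * n) * D"
    using mult_left_mono[of "(k + 2) * P" "3 * D" n] assms(4) by (simp add: algebra_simps)
  then have "n * P / D \<le> 3 * n / (k + 2)"
    using \<open>D > 0\<close> assms(3) by (simp add: divide_le_eq le_divide_eq mult.commute)
  moreover have "(n * P - 2 * (k - i)) / D \<le> n * P / D"
    using \<open>D > 0\<close> assms(2) by (simp add: divide_right_mono)
  ultimately show ?thesis unfolding P_def D_def by linarith
qed

lemma eleven_fifths_less_three_div:
  fixes \<epsilon> k n :: real
  assumes "0 < \<epsilon>" and "8 < k" and "0 < n"
  shows "(11/5 - \<epsilon>) * n / k < 3 * n / (k + 2)"
proof -
  have "(11/5 - \<epsilon>) * n / k \<le> 11/5 * n / k"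
    using assms by (intro divide_right_mono mult_right_mono) simp_all
  also have "\<dots> < 3 * n / (k + 2)"
    using assms(2,3) by (simp add: field_simps)
  finally show ?thesis .
qed

lemma N_CM_ge_theorem8_bound:
  assumes "2 ^ 14 \<le> k" and "even k" and "even n" and "0 < i" and "i \<le> k"
  shows "ereal ((real n * (5 * real i * real k - real k + real i + (real i)^2) - 2 * (real k - real i))
      / ((2 * real k + 3 + real i) * real i * real k)) \<le> ereal_of_enat (N_CM k n)"
proof -
  have "ereal ((real n * (5 * real i * real k - real k + real i + (real i)^2) - 2 * (real k - real i))
      / ((2 * real k + 3 + real i) * real i * real k)) \<le> ereal (3 * real n / (real k + 2))"
    using theorem8_bound_le_three_div[of "real i" "real k" "real n"] assms by simp
  also have "\<dots> \<le> ereal_of_enat (N_CM k n)" using N_CM_ge_three_div assms by simp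
  finally show ?thesis .
qed

lemma N_CM_gt_eleven_fifths:
  assumes "0 < \<epsilon>" and "2 ^ 14 \<le> k" and "even k" and "0 < n" and "even n"
  shows "ereal ((11/5 - \<epsilon>) * real n / real k) < ereal_of_enat (N_CM k n)"
proof -
  have "ereal ((11/5 - \<epsilon>) * real n / real k) < ereal (3 * real n / (real k + 2))"
    using eleven_fifths_less_three_div[of \<epsilon> "real k" "real n"] assms by simp
  also have "\<dots> \<le> ereal_of_enat (N_CM k n)" using N_CM_ge_three_div assms by simp
  finally show ?thesis .
qed

theorem theorem8:
  shows "(\<exists>k0::nat. \<forall>k n i :: nat. k > k0 \<and> even k \<and> even n \<and> k < 2 * i \<and> i < k \<longrightarrow>
            ereal ((real n * (5 * real i * real k - real k + real i + (real i)^2) - 2 * (real k - real i))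
                   / ((2 * real k + 3 + real i) * real i * real k))
            \<le> ereal_of_enat (N_CM k n))
       \<and> (\<forall>\<epsilon>::real. \<epsilon> > 0 \<longrightarrow> (\<exists>k0::nat. \<forall>k::nat. k > k0 \<and> even k \<longrightarrow>
            (\<exists>n0::nat. \<forall>n::nat. n > n0 \<and> even n \<longrightarrow>
               ereal ((11/5 - \<epsilon>) * real n / real k) < ereal_of_enat (N_CM k n))))"
  by (intro conjI allI impI exI[of _ "2 ^ 14"]; elim conjE;
      rule N_CM_ge_theorem8_bound N_CM_gt_eleven_fifths; simp)

end
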